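(* Let $\mathcal T$ be a type theory. (1) If $B\vdash^{\mathcal T}_{\equiv}\Delta_1:\sigma$ and $\Delta_1\to\Delta_2$, then $\|\Delta_1\|=_\beta\|\Delta_2\|$. (2) For $\mathcal R\in\{=_\beta,=_{\beta\eta}\}$: if $B\vdash^{\mathcal T}_{\mathcal R}\Delta_1:\sigma$ and $\Delta_1\to\Delta_2$, then $\|\Delta_1\|\mathrel{\mathcal R}\|\Delta_2\|$. (3) If $B\vdash^{\mathcal T}_{=_{\beta\eta}}\Delta_1:\sigma$ and $\Delta_1\to_\eta\Delta_2$, then $\|\Delta_1\|=_\eta\|\Delta_2\|$.
   Context: Type atoms: a set $\mathbb{A}$ of symbols; $\omega$ denotes a distinguished atom (the universal type). Intersection types over $\mathbb A$: $\sigma::= a\mid\sigma\to\sigma\mid\sigma\cap\sigma$ ($a\in\mathbb A$). An intersection type theory $\mathcal T$ over $\mathbb A$ is a set of inequalities $\sigma\le\tau$ (written $\sigma\le_{\mathcal T}\tau$) closed under (refl) $\sigma\le\sigma$; (incl) $\sigma\cap\tau\le\sigma$ and $\sigma\cap\tau\le\tau$; (glb) $\rho\le\sigma$ and $\rho\le\tau$ imply $\rho\le\sigma\cap\tau$; (trans) $\sigma\le\tau$ and $\tau\le\rho$ imply $\sigma\le\rho$. $\Delta$-terms: $\Delta::=u_\Delta\mid x\mid\lambda x{:}\sigma.\Delta\mid\Delta\,\Delta\mid\langle\Delta,\Delta\rangle\mid pr_1\Delta\mid pr_2\Delta\mid\Delta^\sigma$, where for every (not necessarily typable) $\Delta$-term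 $\Delta$ there is a constant $u_\Delta$. The essence $\|\Delta\|$ is the pure $\lambda$-term defined by $\|x\|=x$, $\|u_\Delta\|=\|\Delta\|$, $\|\Delta^\sigma\|=\|\Delta\|$, $\|\lambda x{:}\sigma.\Delta\|=\lambda x.\|\Delta\|$, $\|\Delta_1\Delta_2\|=\|\Delta_1\|\,\|\Delta_2\|$, $\|\langle\Delta_1,\Delta_2\rangle\|=\|\Delta_1\|$, $\|pr_i\Delta\|=\|\Delta\|$. Let $\mathcal R$ be one of $\equiv$ (syntactic identity up to $\alpha$), $=_\beta$, $=_{\beta\eta}$ on pure $\lambda$-terms. A basis $B$ is a finite set of declarations $x{:}\sigma$ with distinct variables. The typed system $\Delta^{\mathcal T}_{\mathcal R}$ derives $B\vdash^{\mathcal T}_{\mathcal R}\Delta:\sigma$ by: (top) $B\vdash u_\Delta:\omega$ if $\omega\in\mathbb A$; (ax) $B\vdash x:\sigma$ if $x{:}\sigma\in B$; ($\to$I) from $B,x{:}\sigma\vdash\Delta:\tau$ infer $B\vdash\lambda x{:}\sigma.\Delta:\sigma\to\tau$; ($\to$E) from $B\vdash\Delta_1:\sigma\to\tau$ and $B\vdash\Delta_2:\sigma$ infer $B\vdash\Delta_1\Delta_2:\tau$; ($\cap$I) from $B\vdash\Delta_1:\sigma$, $B\vdash\Delta_2:\tau$ and $\|\Delta_1\|\mathrel{\mathcal R}\|\Delta_2\|$ infer $B\vdash\langle\Delta_1,\Delta_2\rangle:\sigma\cap\tau$; ($\cap$E$_1$) from $B\vdash\Delta:\sigma\cap\tau$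 infer $B\vdash pr_1\Delta:\sigma$; ($\cap$E$_2$) from $B\vdash\Delta:\sigma\cap\tau$ infer $B\vdash pr_2\Delta:\tau$; ($\le_{\mathcal T}$) from $B\vdash\Delta:\sigma$ and $\sigma\le_{\mathcal T}\tau$ infer $B\vdash\Delta^\tau:\tau$. Substitution $\Delta_1[\Delta_2/x]$ is capture-avoiding, with $u_{\Delta_1}[\Delta_2/x]=u_{\Delta_1[\Delta_2/x]}$ and $(\Delta_1^\sigma)[\Delta_2/x]=(\Delta_1[\Delta_2/x])^\sigma$. Notions of reduction: $(\beta)$ $(\lambda x{:}\sigma.\Delta_1)\Delta_2\to\Delta_1[\Delta_2/x]$; $(pr_i)$ $pr_i\langle\Delta_1,\Delta_2\rangle\to\Delta_i$ ($i=1,2$); $(\eta)$ $\lambda x{:}\sigma.\Delta\,x\to\Delta$ if $x\notin FV(\Delta)$. ($(\lambda x{:}\sigma.\Delta_1)^\tau\Delta_2$ is not a redex.) $\to$ denotes the contextual closure of $(\beta)$ and $(pr_i)$, and $\to_\eta$ that of $(\eta)$, where no reduction is performed inside the index $\Delta$ of a constant $u_\Delta$. *)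

theory Defs
  imports Main
begin

text \<open>The universal
atom omega is given by a parameter om :: 'a option; om = Some w means that
omega = w belongs to the atom set, om = None means omega is not an atom.\<close>

datatype 'a ity = Atom 'a | Arr "'a ity" "'a ity" | Inter "'a ity" "'a ity"

definition type_theory :: "('a ity \<times> 'a ity) set \<Rightarrow> bool" where
  "type_theory T \<longleftrightarrow>
     (\<forall>s. (s, s) \<in> T) \<and>
     (\<forall>s t. (Inter s t, s) \<in> T \<and> (Inter s t, t) \<in> T) \<and>
     (\<forall>r s t. (r, s) \<in> T \<longrightarrow> (r, t) \<in> T \<longrightarrow> (r, Inter s t) \<in> T) \<and>
     (\<forall>s t r. (s, t) \<in> T \<longrightarrow> (t, r) \<in> T \<longrightarrow> (s, r) \<in> T)"

datatype lterm = LVar nat | LApp lterm lterm | LAbs lterm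

fun llift :: "nat \<Rightarrow> lterm \<Rightarrow> lterm" where
  "llift k (LVar i) = (if i < k then LVar i else LVar (Suc i))"
| "llift k (LApp s t) = LApp (llift k s) (llift k t)"
| "llift k (LAbs t) = LAbs (llift (Suc k) t)"

fun lsubst :: "lterm \<Rightarrow> nat \<Rightarrow> lterm \<Rightarrow> lterm" where
  "lsubst (LVar i) k s = (if i < k then LVar i else if i = k then s else LVar (i - 1))"
| "lsubst (LApp t u) k s = LApp (lsubst t k s) (lsubst u k s)"
| "lsubst (LAbs t) k s = LAbs (lsubst t (Suc k) (llift 0 s))"

fun lfree :: "nat \<Rightarrow> lterm \<Rightarrow> bool" where
  "lfree k (LVar i) = (i = k)"
| "lfree k (LApp s t) = (lfree k s \<or> lfree k t)"
| "lfree k (LAbs t) = lfree (Suc k) t"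

fun ldown :: "nat \<Rightarrow> lterm \<Rightarrow> lterm" where
  "ldown k (LVar i) = (if i < k then LVar i else LVar (i - 1))"
| "ldown k (LApp s t) = LApp (ldown k s) (ldown k t)"
| "ldown k (LAbs t) = LAbs (ldown (Suc k) t)"

inductive lbeta :: "lterm \<Rightarrow> lterm \<Rightarrow> bool" where
  beta: "lbeta (LApp (LAbs s) t) (lsubst s 0 t)"
| appL: "lbeta s s' \<Longrightarrow> lbeta (LApp s t) (LApp s' t)"
| appR: "lbeta t t' \<Longrightarrow> lbeta (LApp s t) (LApp s t')"
| abs: "lbeta s s' \<Longrightarrow> lbeta (LAbs s) (LAbs s')"

inductive leta :: "lterm \<Rightarrow> lterm \<Rightarrow> bool" where
  eta: "\<not> lfree 0 s \<Longrightarrow> leta (LAbs (LApp s (LVar 0))) (ldown 0 s)"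
| appL: "leta s s' \<Longrightarrow> leta (LApp s t) (LApp s' t)"
| appR: "leta t t' \<Longrightarrow> leta (LApp s t) (LApp s t')"
| abs: "leta s s' \<Longrightarrow> leta (LAbs s) (LAbs s')"

definition beta_eq :: "lterm \<Rightarrow> lterm \<Rightarrow> bool" where
  "beta_eq = equivclp lbeta"

definition eta_eq :: "lterm \<Rightarrow> lterm \<Rightarrow> bool" where
  "eta_eq = equivclp leta"

definition beta_eta_eq :: "lterm \<Rightarrow> lterm \<Rightarrow> bool" where
  "beta_eta_eq = equivclp (sup lbeta leta)"

datatype relkind = Syn | Beta | BetaEta

fun relOf :: "relkind \<Rightarrow> lterm \<Rightarrow> lterm \<Rightarrow> bool" where
  "relOf Syn = (=)"
| "relOf Beta = beta_eq"
| "relOf BetaEta = beta_eta_eq"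

datatype 'a dterm =
    U "'a dterm"                   (* constant u_Delta *)
  | DVar nat
  | DLam "'a ity" "'a dterm"
  | DApp "'a dterm" "'a dterm"
  | DPair "'a dterm" "'a dterm"
  | Pr1 "'a dterm"
  | Pr2 "'a dterm"
  | Coe "'a dterm" "'a ity"

fun essence :: "'a dterm \<Rightarrow> lterm" where
  "essence (DVar i) = LVar i"
| "essence (U d) = essence d"
| "essence (Coe d s) = essence d"
| "essence (DLam s d) = LAbs (essence d)"
| "essence (DApp d e) = LApp (essence d) (essence e)"
| "essence (DPair d e) = essence d"
| "essence (Pr1 d) = essence d"
| "essence (Pr2 d) = essence d"

fun dlift :: "nat \<Rightarrow> 'a dterm \<Rightarrow> 'a dterm" where
  "dlift k (DVar i) = (if i < k then DVar i else DVar (Suc i))"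
| "dlift k (U d) = U (dlift k d)"
| "dlift k (Coe d s) = Coe (dlift k d) s"
| "dlift k (DLam s d) = DLam s (dlift (Suc k) d)"
| "dlift k (DApp d e) = DApp (dlift k d) (dlift k e)"
| "dlift k (DPair d e) = DPair (dlift k d) (dlift k e)"
| "dlift k (Pr1 d) = Pr1 (dlift k d)"
| "dlift k (Pr2 d) = Pr2 (dlift k d)"

fun dsubst :: "'a dterm \<Rightarrow> nat \<Rightarrow> 'a dterm \<Rightarrow> 'a dterm" where
  "dsubst (DVar i) k s = (if i < k then DVar i else if i = k then s else DVar (i - 1))"
| "dsubst (U d) k s = U (dsubst d k s)"
| "dsubst (Coe d t) k s = Coe (dsubst d k s) t"
| "dsubst (DLam t d) k s = DLam t (dsubst d (Suc k) (dlift 0 s))"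
| "dsubst (DApp d e) k s = DApp (dsubst d k s) (dsubst e k s)"
| "dsubst (DPair d e) k s = DPair (dsubst d k s) (dsubst e k s)"
| "dsubst (Pr1 d) k s = Pr1 (dsubst d k s)"
| "dsubst (Pr2 d) k s = Pr2 (dsubst d k s)"

fun dfree :: "nat \<Rightarrow> 'a dterm \<Rightarrow> bool" where
  "dfree k (DVar i) = (i = k)"
| "dfree k (U d) = dfree k d"
| "dfree k (Coe d s) = dfree k d"
| "dfree k (DLam s d) = dfree (Suc k) d"
| "dfree k (DApp d e) = (dfree k d \<or> dfree k e)"
| "dfree k (DPair d e) = (dfree k d \<or> dfree k e)"
| "dfree k (Pr1 d) = dfree k d"
| "dfree k (Pr2 d) = dfree k d"

fun ddown :: "nat \<Rightarrow> 'a dterm \<Rightarrow> 'a dterm" where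
  "ddown k (DVar i) = (if i < k then DVar i else DVar (i - 1))"
| "ddown k (U d) = U (ddown k d)"
| "ddown k (Coe d s) = Coe (ddown k d) s"
| "ddown k (DLam s d) = DLam s (ddown (Suc k) d)"
| "ddown k (DApp d e) = DApp (ddown k d) (ddown k e)"
| "ddown k (DPair d e) = DPair (ddown k d) (ddown k e)"
| "ddown k (Pr1 d) = Pr1 (ddown k d)"
| "ddown k (Pr2 d) = Pr2 (ddown k d)"

text \<open>One-step reduction: contextual closure of (beta) and (pr_i), never inside
the index of a constant U.\<close>
inductive dred :: "'a dterm \<Rightarrow> 'a dterm \<Rightarrow> bool" where
  beta: "dred (DApp (DLam s d) e) (dsubst d 0 e)"
| pr1: "dred (Pr1 (DPair d e)) d"
| pr2: "dred (Pr2 (DPair d e)) e"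
| lam: "dred d d' \<Longrightarrow> dred (DLam s d) (DLam s d')"
| appL: "dred d d' \<Longrightarrow> dred (DApp d e) (DApp d' e)"
| appR: "dred e e' \<Longrightarrow> dred (DApp d e) (DApp d e')"
| pairL: "dred d d' \<Longrightarrow> dred (DPair d e) (DPair d' e)"
| pairR: "dred e e' \<Longrightarrow> dred (DPair d e) (DPair d e')"
| prj1: "dred d d' \<Longrightarrow> dred (Pr1 d) (Pr1 d')"
| prj2: "dred d d' \<Longrightarrow> dred (Pr2 d) (Pr2 d')"
| coe: "dred d d' \<Longrightarrow> dred (Coe d s) (Coe d' s)"

inductive deta :: "'a dterm \<Rightarrow> 'a dterm \<Rightarrow> bool" where
  eta: "\<not> dfree 0 d \<Longrightarrow> deta (DLam s (DApp d (DVar 0))) (ddown 0 d)"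
| lam: "deta d d' \<Longrightarrow> deta (DLam s d) (DLam s d')"
| appL: "deta d d' \<Longrightarrow> deta (DApp d e) (DApp d' e)"
| appR: "deta e e' \<Longrightarrow> deta (DApp d e) (DApp d e')"
| pairL: "deta d d' \<Longrightarrow> deta (DPair d e) (DPair d' e)"
| pairR: "deta e e' \<Longrightarrow> deta (DPair d e) (DPair d e')"
| prj1: "deta d d' \<Longrightarrow> deta (Pr1 d) (Pr1 d')"
| prj2: "deta d d' \<Longrightarrow> deta (Pr2 d) (Pr2 d')"
| coe: "deta d d' \<Longrightarrow> deta (Coe d s) (Coe d' s)"

text \<open>A basis is a list B of types: de Bruijn variable i has type B ! i.\<close>
inductive typing :: "('a ity \<times> 'a ity) set \<Rightarrow> 'a option \<Rightarrow> relkind \<Rightarrow>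
    'a ity list \<Rightarrow> 'a dterm \<Rightarrow> 'a ity \<Rightarrow> bool"
  for T :: "('a ity \<times> 'a ity) set" and om :: "'a option" and R :: relkind where
  top: "om = Some w \<Longrightarrow> typing T om R B (U d) (Atom w)"
| ax: "i < length B \<Longrightarrow> typing T om R B (DVar i) (B ! i)"
| arrI: "typing T om R (s # B) d t \<Longrightarrow> typing T om R B (DLam s d) (Arr s t)"
| arrE: "typing T om R B d (Arr s t) \<Longrightarrow> typing T om R B e s \<Longrightarrow>
         typing T om R B (DApp d e) t"
| interI: "typing T om R B d s \<Longrightarrow> typing T om R B e t \<Longrightarrow>
           relOf R (essence d) (essence e) \<Longrightarrow> typing T om R B (DPair d e) (Inter s t)"
| interE1: "typing T om R B d (Inter s t) \<Longrightarrow> typing T om R B (Pr1 d) s"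
| interE2: "typing T om R B d (Inter s t) \<Longrightarrow> typing T om R B (Pr2 d) t"
| leT: "typing T om R B d s \<Longrightarrow> (s, t) \<in> T \<Longrightarrow> typing T om R B (Coe d t) t"

end

theory Submission
  imports Defs
begin

text \<open>The essence commutes with lifting and substitution, so a Delta-beta step is a
beta step on essences, and an eta step is an eta step on essences.  Every other
contraction is sent to the identity, except pr_2 applied to a pair: the essence of
a pair is that of its first component, so the contraction relates the essences of
the two components, which the side condition of the intersection introduction rule
makes R-related.  This is the only place where typability is used, and no axiom of
the type theory is needed.\<close>

definition lcompatible :: "(lterm \<Rightarrow> lterm \<Rightarrow> bool) \<Rightarrow> bool" where
  "lcompatible r \<longleftrightarrow>
     (\<forall>s s' t. r s s' \<longrightarrow> r (LApp s t) (LApp s' t) \<and> r (LApp t s) (LApp t s')) \<and>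
     (\<forall>s s'. r s s' \<longrightarrow> r (LAbs s) (LAbs s'))"

lemma lcompatibleD:
  assumes "lcompatible r" and "r s s'"
  shows "r (LApp s t) (LApp s' t)" and "r (LApp t s) (LApp t s')" and "r (LAbs s) (LAbs s')"
  using assms by (auto simp: lcompatible_def)

lemma lcompatible_lbeta: "lcompatible lbeta"
  by (auto simp: lcompatible_def intro: lbeta.intros)

lemma lcompatible_leta: "lcompatible leta"
  by (auto simp: lcompatible_def intro: leta.intros)

lemma lcompatible_sup: "lcompatible r \<Longrightarrow> lcompatible r' \<Longrightarrow> lcompatible (sup r r')"
  by (auto simp: lcompatible_def)

lemma equivclp_preserved:
  assumes "\<And>x y. r x y \<Longrightarrow> r (f x) (f y)" and "equivclp r a b"
  shows "equivclp r (f a) (f b)"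
  using assms(2)
proof (induction rule: equivclp_induct)
  case base
  show ?case by simp
next
  case (step y z)
  then have "equivclp r (f y) (f z)"
    using assms(1) by blast
  with step.IH show ?case
    by (rule equivclp_trans)
qed

lemma lcompatible_equivclp:
  assumes "lcompatible r"
  shows "lcompatible (equivclp r)"
  unfolding lcompatible_def
proof (intro conjI allI impI)
  fix s s' t
  assume "equivclp r s s'"
  with lcompatibleD[OF assms] show
    "equivclp r (LApp s t) (LApp s' t)"
    "equivclp r (LApp t s) (LApp t s')"
    "equivclp r (LAbs s) (LAbs s')"
    using equivclp_preserved[of r "\<lambda>x. LApp x t" s s'] equivclp_preserved[of r "LApp t" s s']
      equivclp_preserved[of r LAbs s s']
    by blast+
qed

lemma lcompatible_beta_eq: "lcompatible beta_eq"
  unfolding beta_eq_def by (intro lcompatible_equivclp lcompatible_lbeta)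

lemma lcompatible_beta_eta_eq: "lcompatible beta_eta_eq"
  unfolding beta_eta_eq_def
  by (intro lcompatible_equivclp lcompatible_sup lcompatible_lbeta lcompatible_leta)

lemma lcompatible_eta_eq: "lcompatible eta_eq"
  unfolding eta_eq_def by (intro lcompatible_equivclp lcompatible_leta)

lemma essence_dlift: "essence (dlift k d) = llift k (essence d)"
  by (induction d arbitrary: k) auto

lemma essence_dsubst: "essence (dsubst d k e) = lsubst (essence d) k (essence e)"
  by (induction d arbitrary: k e) (auto simp: essence_dlift)

lemma essence_ddown: "essence (ddown k d) = ldown k (essence d)"
  by (induction d arbitrary: k) auto

lemma dfree_if_lfree_essence: "lfree k (essence d) \<Longrightarrow> dfree k d"
  by (induction d arbitrary: k) auto

inductive_cases typing_DAppE: "typing T om R B (DApp d e) t"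
inductive_cases typing_DLamE: "typing T om R B (DLam s d) t"
inductive_cases typing_DPairE: "typing T om R B (DPair d e) t"
inductive_cases typing_Pr1E: "typing T om R B (Pr1 d) t"
inductive_cases typing_Pr2E: "typing T om R B (Pr2 d) t"
inductive_cases typing_CoeE: "typing T om R B (Coe d s) t"

lemma dred_essence_related:
  assumes "dred d1 d2" and "typing T om R B d1 s"
    and refl: "reflp conv" and compat: "lcompatible conv"
    and lbeta_le: "lbeta \<le> conv" and relOf_le: "relOf R \<le> conv"
  shows "conv (essence d1) (essence d2)"
  using assms(1,2)
proof (induction d1 d2 arbitrary: B s rule: dred.induct)
  case (beta s d e)
  show ?case
    using lbeta_le lbeta.beta by (auto simp: essence_dsubst)
next
  case (pr1 d e)
  show ?case
    using refl by (simp add: reflpD)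
next
  case (pr2 d e)
  then show ?case
    using relOf_le by (auto elim!: typing_Pr2E typing_DPairE)
next
  case (lam d d' s)
  then show ?case
    using compat by (auto elim!: typing_DLamE intro: lcompatibleD)
next
  case (appL d d' e)
  then show ?case
    using compat by (auto elim!: typing_DAppE intro: lcompatibleD)
next
  case (appR e e' d)
  then show ?case
    using compat by (auto elim!: typing_DAppE intro: lcompatibleD)
next
  case (pairL d d' e)
  then show ?case by (auto elim!: typing_DPairE)
next
  case (pairR e e' d)
  show ?case
    using refl by (simp add: reflpD)
next
  case (prj1 d d')
  then show ?case by (auto elim!: typing_Pr1E)
next
  case (prj2 d d')
  then show ?case by (auto elim!: typing_Pr2E)
next
  case (coe d d' t)
  from coe.prems obtain t' where "typing T om R B d t'"
    by (auto elim: typing_CoeE)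
  then show ?case
    using coe.IH by simp
qed

lemma deta_essence_eta_eq: "deta d1 d2 \<Longrightarrow> eta_eq (essence d1) (essence d2)"
proof (induction rule: deta.induct)
  case (eta d s)
  then have "\<not> lfree 0 (essence d)"
    using dfree_if_lfree_essence by blast
  then show ?case
    by (auto simp: eta_eq_def essence_ddown intro: leta.eta)
qed (auto simp: eta_eq_def intro: lcompatibleD[OF lcompatible_eta_eq[unfolded eta_eq_def]])

lemma reflp_beta_eq: "reflp beta_eq"
  unfolding beta_eq_def by (rule reflp_equivclp)

lemma reflp_beta_eta_eq: "reflp beta_eta_eq"
  unfolding beta_eta_eq_def by (rule reflp_equivclp)

lemma lbeta_le_beta_eq: "lbeta \<le> beta_eq"
  by (auto simp: beta_eq_def)

lemma lbeta_le_beta_eta_eq: "lbeta \<le> beta_eta_eq"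
  by (auto simp: beta_eta_eq_def)

theorem mainTheorem9:
  fixes T :: "('a ity \<times> 'a ity) set" and om :: "'a option"
  assumes "type_theory T"
  shows "(\<forall>B d1 d2 s. typing T om Syn B d1 s \<longrightarrow> dred d1 d2 \<longrightarrow>
            beta_eq (essence d1) (essence d2))
       \<and> (\<forall>R B d1 d2 s. R \<in> {Beta, BetaEta} \<longrightarrow> typing T om R B d1 s \<longrightarrow> dred d1 d2 \<longrightarrow>
            relOf R (essence d1) (essence d2))
       \<and> (\<forall>B d1 d2 s. typing T om BetaEta B d1 s \<longrightarrow> deta d1 d2 \<longrightarrow>
            eta_eq (essence d1) (essence d2))"
proof (intro conjI allI impI)
  note beta_conv = reflp_beta_eq lcompatible_beta_eq lbeta_le_beta_eq
  note beta_eta_conv = reflp_beta_eta_eq lcompatible_beta_eta_eq lbeta_le_beta_eta_eq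
  fix B d1 d2 s
  {
    assume "typing T om Syn B d1 s" and "dred d1 d2"
    moreover have "relOf Syn \<le> beta_eq"
      by (auto simp: beta_eq_def)
    ultimately show "beta_eq (essence d1) (essence d2)"
      using dred_essence_related[OF _ _ beta_conv] by blast
  next
    fix R
    assume "R \<in> {Beta, BetaEta}" and "typing T om R B d1 s" and "dred d1 d2"
    then show "relOf R (essence d1) (essence d2)"
      using dred_essence_related[OF \<open>dred d1 d2\<close> _ beta_conv, of T om Beta B s]
        dred_essence_related[OF \<open>dred d1 d2\<close> _ beta_eta_conv, of T om BetaEta B s]
      by auto
  next
    assume "deta d1 d2"
    then show "eta_eq (essence d1) (essence d2)"
      by (rule deta_essence_eta_eq)
  }
qed

end
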